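(* Let $p^{(0)}=p$ and, for $k\ge1$, given any orthogonal matrices $R_k\in\mathbb{R}^{d\times d}$, let $F_k^*\in\arg\min_{F\in\mathcal{F}}\mathrm{KL}\big(F\#\gamma\,\|\,R_k\#p^{(k-1)}\big)$ (assumed to exist) and $p^{(k)}=(F_k^* )^{-1}\#\big(R_k\#p^{(k-1)}\big)$. Let $q^{(0)}=\gamma$ and $q^{(k)}=(R_1^\top\circ F_1^*\circ R_2^\top\circ F_2^*\circ\cdots\circ R_k^\top\circ F_k^* )\#\gamma$. Then for all $k\ge1$, $$\mathrm{KL}(\gamma\|p^{(k)})\le\mathrm{KL}(\gamma\|p^{(k-1)}),\qquad \mathrm{KL}(q^{(k)}\|p)\le\mathrm{KL}(q^{(k-1)}\|p).$$
   Context: $\gamma=\mathcal{N}(0,I_d)$; $p$ is a probability density on $\mathbb{R}^d$. $\mathcal{F}$ is the set of coordinatewise diffeomorphisms $F(\mathbf{x})=(F_1(x_1),\dots,F_d(x_d))$ of $\mathbb{R}^d$ with each $F_i:\mathbb{R}\to\mathbb{R}$ a diffeomorphism. For a diffeomorphism (or orthogonal linear map) $T$ and a distribution $\mu$, $T\#\mu$ denotes the law of $T(X)$ with $X\sim\mu$; for orthogonal $R$, $R\#p$ has density $p(R^\top\mathbf{x})$. $\mathrm{KL}(q\|p)=\mathbb{E}_q[\log(q/p)]$. *)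

theory Defs
  imports "HOL-Probability.Probability"
begin

text \<open>It is +infinity if Q is not absolutely continuous w.r.t. P. Otherwise it is the
  Q-integral of log of the Radon-Nikodym density dQ/dP, split into positive and
  negative parts (the negative part is always finite for probability measures).\<close>
definition KL :: "'a measure \<Rightarrow> 'a measure \<Rightarrow> ereal" where
  "KL Q P =
     (if absolutely_continuous P Q
      then enn2ereal (\<integral>\<^sup>+ x. ennreal (max 0 (ln (enn2real (RN_deriv P Q x)))) \<partial>Q)
         - enn2ereal (\<integral>\<^sup>+ x. ennreal (max 0 (- ln (enn2real (RN_deriv P Q x)))) \<partial>Q)
      else \<infinity>)"

definition gaussian :: "(real ^ 'n :: finite) measure" where
  "gaussian = density lborel (\<lambda>x. ennreal (\<Prod>i\<in>UNIV. std_normal_density (x $ i)))"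

definition diffeo_real :: "(real \<Rightarrow> real) \<Rightarrow> bool" where
  "diffeo_real f \<longleftrightarrow> bij f
     \<and> (\<exists>f'. (\<forall>x. (f has_real_derivative f' x) (at x)) \<and> continuous_on UNIV f')
     \<and> (\<exists>g'. (\<forall>y. (inv f has_real_derivative g' y) (at y)) \<and> continuous_on UNIV g')"

definition coord_diffeos :: "(real ^ 'n :: finite \<Rightarrow> real ^ 'n) set" where
  "coord_diffeos = {F. \<exists>f :: 'n \<Rightarrow> real \<Rightarrow> real.
       (\<forall>i. diffeo_real (f i)) \<and> F = (\<lambda>x. \<chi> i. f i (x $ i))}"

definition push :: "('a \<Rightarrow> 'b::topological_space) \<Rightarrow> 'a measure \<Rightarrow> 'b measure" where
  "push T \<mu> = distr \<mu> borel T"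

fun pseq :: "(real ^ 'n :: finite \<Rightarrow> real) \<Rightarrow> (nat \<Rightarrow> real ^ 'n ^ 'n)
              \<Rightarrow> (nat \<Rightarrow> real ^ 'n \<Rightarrow> real ^ 'n) \<Rightarrow> nat \<Rightarrow> (real ^ 'n) measure" where
  "pseq p R F 0 = density lborel (\<lambda>x. ennreal (p x))"
| "pseq p R F (Suc k) =
     push (inv (F (Suc k))) (push (\<lambda>x. R (Suc k) *v x) (pseq p R F k))"

fun Tcomp :: "(nat \<Rightarrow> real ^ 'n ^ 'n) \<Rightarrow> (nat \<Rightarrow> real ^ 'n \<Rightarrow> real ^ 'n)
              \<Rightarrow> nat \<Rightarrow> real ^ 'n :: finite \<Rightarrow> real ^ 'n" where
  "Tcomp R F 0 = id"
| "Tcomp R F (Suc k) = Tcomp R F k \<circ> (\<lambda>x. transpose (R (Suc k)) *v x) \<circ> F (Suc k)"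

definition qseq :: "(nat \<Rightarrow> real ^ 'n ^ 'n) \<Rightarrow> (nat \<Rightarrow> real ^ 'n \<Rightarrow> real ^ 'n)
              \<Rightarrow> nat \<Rightarrow> (real ^ 'n :: finite) measure" where
  "qseq R F k = push (Tcomp R F k) gaussian"

end

theory Submission
  imports Defs "HOL-Analysis.Change_Of_Vars"
begin

(* KL divergence is unchanged when both arguments are pushed forward along the same
   bimeasurable bijection. Since p^(k) is the image of R_k # p^(k-1) under F_k^-1,
   KL(gamma || p^(k)) = KL(F_k # gamma || R_k # p^(k-1)); by minimality of F_k this is at most
   the value at F = id, namely KL(gamma || R_k # p^(k-1)) = KL(R_k^T # gamma || p^(k-1)),
   and R_k^T # gamma = gamma by rotation invariance of the standard Gaussian.
   The second inequality is the first in disguise: q^(k) and p are the images of gamma and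
   p^(k) under the same bijection R_1^T o F_1 o ... o R_k^T o F_k, so
   KL(q^(k) || p) = KL(gamma || p^(k)). *)

lemma absolutely_continuous_distr_iff:
  assumes sets_eq: "sets Q = sets P"
    and T: "T \<in> measurable P M" and S: "S \<in> measurable M P"
    and inverse: "\<forall>x\<in>space P. S (T x) = x"
  shows "absolutely_continuous (distr P M T) (distr Q M T) \<longleftrightarrow> absolutely_continuous P Q"
proof -
  have space_eq: "space Q = space P" using sets_eq_imp_space_eq[OF sets_eq] .
  have TQ: "T \<in> measurable Q M" using T by (simp add: measurable_def space_eq sets_eq)
  show ?thesis
  proof
    assume ac: "absolutely_continuous (distr P M T) (distr Q M T)"
    show "absolutely_continuous P Q" unfolding absolutely_continuous_def
    proof
      fix A assume A: "A \<in> null_sets P"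
      let ?B = "S -` A \<inter> space M"
      have B: "?B \<in> sets M" using S A by (auto simp: measurable_def)
      have preimage: "T -` ?B \<inter> space P = A"
        using inverse sets.sets_into_space[of A P] A T by (auto simp: measurable_def)
      have "?B \<in> null_sets (distr Q M T)"
        using ac A B preimage by (auto simp: absolutely_continuous_def null_sets_distr_iff[OF T])
      then show "A \<in> null_sets Q"
        using preimage space_eq by (simp add: null_sets_distr_iff[OF TQ])
    qed
  next
    assume "absolutely_continuous P Q"
    then show "absolutely_continuous (distr P M T) (distr Q M T)"
      by (auto simp: absolutely_continuous_def null_sets_distr_iff[OF T] null_sets_distr_iff[OF TQ] space_eq)
  qed
qed

lemma KL_distr:
  assumes "sigma_finite_measure P" and sets_eq: "sets Q = sets P"
    and T: "T \<in> measurable P M" and S: "S \<in> measurable M P"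
    and inverse: "\<forall>x\<in>space P. S (T x) = x"
  shows "KL (distr Q M T) (distr P M T) = KL Q P"
proof (cases "absolutely_continuous P Q")
  case False
  then show ?thesis
    unfolding KL_def using absolutely_continuous_distr_iff[OF sets_eq T S inverse] by simp
next
  case ac: True
  interpret sigma_finite_measure P by fact
  have TQ: "T \<in> measurable Q M"
    using T by (simp add: measurable_def sets_eq sets_eq_imp_space_eq[OF sets_eq])
  have ac_distr: "absolutely_continuous (distr P M T) (distr Q M T)"
    using absolutely_continuous_distr_iff[OF sets_eq T S inverse] ac by simp
  have RN: "AE x in Q. RN_deriv (distr P M T) (distr Q M T) (T x) = RN_deriv P Q x"
    by (rule absolutely_continuous_AE[OF sets_eq ac RN_deriv_distr[OF T S inverse ac_distr sets_eq]])
  have nn_integral_RN: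
    "(\<integral>\<^sup>+ y. ennreal (h (enn2real (RN_deriv (distr P M T) (distr Q M T) y))) \<partial>distr Q M T)
       = (\<integral>\<^sup>+ x. ennreal (h (enn2real (RN_deriv P Q x))) \<partial>Q)"
    if "h \<in> borel_measurable borel" for h :: "real \<Rightarrow> real"
  proof -
    have "(\<lambda>y. ennreal (h (enn2real (RN_deriv (distr P M T) (distr Q M T) y))))
        \<in> borel_measurable (distr Q M T)"
      using that by (simp add: measurable_compose[OF borel_measurable_RN_deriv])
    then show ?thesis
      by (simp add: nn_integral_distr[OF TQ]) (use RN in \<open>auto intro: nn_integral_cong_AE\<close>)
  qed
  have pos: "(\<lambda>t::real. max 0 (ln t)) \<in> borel_measurable borel" by measurable
  have neg: "(\<lambda>t::real. max 0 (- ln t)) \<in> borel_measurable borel" by measurable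
  show ?thesis
    unfolding KL_def using ac ac_distr nn_integral_RN[OF pos] nn_integral_RN[OF neg] by simp
qed

lemma sets_push [simp]: "sets (push T M) = sets borel"
  by (simp add: push_def)

lemma push_id: "sets M = sets borel \<Longrightarrow> push id M = M"
  by (simp add: push_def id_def distr_id2)

lemma push_push:
  assumes "S \<in> measurable M borel" and "T \<in> borel_measurable borel"
  shows "push T (push S M) = push (T \<circ> S) M"
  unfolding push_def using assms by (intro distr_distr) simp_all

lemma push_push_inverse:
  assumes "sets M = sets borel" and "T \<in> borel_measurable borel" and "S \<in> borel_measurable borel"
    and "\<And>x. S (T x) = x"
  shows "push S (push T M) = M"
proof -
  have "T \<in> measurable M borel"
    unfolding measurable_cong_sets[OF assms(1) refl] by (rule assms(2))
  then have "push S (push T M) = push (\<lambda>x. x) M"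
    using assms(3,4) by (simp add: push_push comp_def)
  also have "\<dots> = M"
    using assms(1) by (simp add: push_def distr_id2)
  finally show ?thesis .
qed

lemma KL_push:
  assumes "sigma_finite_measure P" and "sets P = sets borel" and "sets Q = sets borel"
    and "T \<in> borel_measurable borel" and "S \<in> borel_measurable borel" and "\<And>x. S (T x) = x"
  shows "KL (push T Q) (push T P) = KL Q P"
  unfolding push_def
proof (rule KL_distr)
  show "T \<in> measurable P borel"
    unfolding measurable_cong_sets[OF assms(2) refl] by (rule assms(4))
  show "S \<in> measurable borel P"
    unfolding measurable_cong_sets[OF refl assms(2)] by (rule assms(5))
qed (use assms in simp_all)

lemma borel_measurable_linear:
  fixes f :: "'a::euclidean_space \<Rightarrow> 'b::real_normed_vector"
  assumes "linear f"
  shows "f \<in> borel_measurable borel"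
  using assms by (intro borel_measurable_continuous_onI linear_continuous_on) (simp add: linear_conv_bounded_linear)

lemma borel_measurable_matrix_vector_mult [measurable]:
  "(\<lambda>x. (A :: real^'n::finite^'m::finite) *v x) \<in> borel_measurable borel"
  by (simp add: borel_measurable_linear)

lemma borel_measurable_vector_matrix_mult [measurable]:
  "(\<lambda>x. x v* (A :: real^'n::finite^'m::finite)) \<in> borel_measurable borel"
  using borel_measurable_matrix_vector_mult[of "transpose A"] by simp

lemma orthogonal_matrix_vector_mult_cancel:
  assumes "orthogonal_matrix (A :: real^'n::finite^'n)"
  shows "(A *v x) v* A = x" "A *v (x v* A) = x"
  using assms unfolding orthogonal_matrix_def
  by (metis matrix_vector_mul_assoc matrix_vector_mul_lid transpose_matrix_vector)+

lemma orthogonal_transformation_vec_reindex: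
  fixes \<sigma> :: "'m::finite \<Rightarrow> 'n::finite"
  assumes "bij \<sigma>"
  shows "orthogonal_transformation (\<lambda>x::real^'n. \<chi> j. x $ \<sigma> j)"
proof -
  have "(\<lambda>x::real^'n. \<chi> j. x $ \<sigma> j) x \<bullet> (\<lambda>x::real^'n. \<chi> j. x $ \<sigma> j) x = x \<bullet> x" for x
    unfolding inner_vec_def using sum.reindex_bij_betw[OF assms, of "\<lambda>i. x $ i * x $ i"] by simp
  then show ?thesis
    unfolding orthogonal_transformation
    by (auto intro: linearI simp: vec_eq_iff norm_eq_sqrt_inner)
qed

lemma lborel_distr_vec_reindex:
  fixes \<sigma> :: "'m::finite \<Rightarrow> 'n::finite"
  assumes \<sigma>: "bij \<sigma>"
  shows "distr lborel borel (\<lambda>x::real^'n. \<chi> j. x $ \<sigma> j) = (lborel :: (real^'m) measure)"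
proof (rule lborel_eqI[symmetric])
  let ?P = "\<lambda>x::real^'n. \<chi> j. x $ \<sigma> j"
  let ?Q = "\<lambda>y::real^'m. \<chi> i. y $ inv \<sigma> i"
  have measurable: "?P \<in> borel_measurable borel"
    using orthogonal_transformation_vec_reindex[OF \<sigma>]
    by (simp add: borel_measurable_linear orthogonal_transformation_linear)
  fix l u :: "real^'m" assume le: "\<And>b. b \<in> Basis \<Longrightarrow> l \<bullet> b \<le> u \<bullet> b"
  have preimage: "?P -` box l u = box (?Q l) (?Q u)"
    using \<sigma> by (auto simp: mem_box_cart bij_inv_eq_iff) (metis bij_inv_eq_iff)+
  have prod_Basis: "(\<Prod>b\<in>Basis. (v - w) \<bullet> b) = (\<Prod>i\<in>UNIV. v $ i - w $ i)" for v w :: "real^'k::finite"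
    by (simp add: Basis_vec_def cart_eq_inner_axis axis_eq_axis prod.UNION_disjoint inner_diff_left)
  have "\<forall>b\<in>Basis. ?Q l \<bullet> b \<le> ?Q u \<bullet> b"
    using le[of "axis (inv \<sigma> _) 1"] by (auto simp: Basis_vec_def inner_axis)
  then have "emeasure lborel (box (?Q l) (?Q u)) = (\<Prod>i\<in>UNIV. u $ inv \<sigma> i - l $ inv \<sigma> i)"
    by (simp add: emeasure_lborel_box_eq prod_Basis)
  also have "\<dots> = (\<Prod>b\<in>Basis. (u - l) \<bullet> b)"
    using prod.reindex_bij_betw[OF bij_imp_bij_inv[OF \<sigma>], of "\<lambda>j. u $ j - l $ j"] by (simp add: prod_Basis)
  finally show "emeasure (distr lborel borel ?P) (box l u) = (\<Prod>b\<in>Basis. (u - l) \<bullet> b)"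
    using measurable preimage by (simp add: emeasure_distr)
qed simp

(* Change_Of_Vars proves that orthogonal maps preserve Lebesgue measure only for index types
   of class wellorder. A copy of any finite index type carries such an order, and relabelling
   the coordinates transfers the result back. *)
typedef 'a well_ordered = "UNIV :: 'a set" by simp

instance well_ordered :: (finite) finite
proof
  have "(UNIV :: 'a well_ordered set) = Abs_well_ordered ` UNIV"
    by (metis Abs_well_ordered_cases surj_def)
  then show "finite (UNIV :: 'a well_ordered set)" by (metis finite finite_imageI)
qed

definition well_ordered_index :: "'a::finite well_ordered \<Rightarrow> nat" where
  "well_ordered_index x = to_nat_on (UNIV :: 'a set) (Rep_well_ordered x)"

lemma inj_well_ordered_index: "inj well_ordered_index"
  unfolding well_ordered_index_def
  by (intro inj_onI) (metis Rep_well_ordered_inject UNIV_I countable_finite finite inj_on_to_nat_on inj_onD)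

instantiation well_ordered :: (finite) wellorder
begin

definition "x \<le> y \<longleftrightarrow> well_ordered_index x \<le> well_ordered_index y"
definition "x < y \<longleftrightarrow> well_ordered_index x < well_ordered_index y"

instance
proof
  fix P :: "'a well_ordered \<Rightarrow> bool" and a
  assume step: "\<And>x. (\<And>y. y < x \<Longrightarrow> P y) \<Longrightarrow> P x"
  have "\<forall>x. well_ordered_index x = n \<longrightarrow> P x" for n
  proof (induction n rule: less_induct)
    case (less n)
    then show ?case using step unfolding less_well_ordered_def by blast
  qed
  then show "P a" by blast
qed (auto simp: less_eq_well_ordered_def less_well_ordered_def inj_well_ordered_index inj_eq)

end

lemma bij_Rep_well_ordered: "bij Rep_well_ordered"
  by (metis Rep_well_ordered_inject Rep_well_ordered_cases UNIV_I bij_def inj_def surj_def)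

lemma bij_Abs_well_ordered: "bij Abs_well_ordered"
  by (metis Abs_well_ordered_inject Abs_well_ordered_cases UNIV_I bij_def inj_def surj_def)

lemma lborel_distr_orthogonal_wellorder:
  fixes T :: "(real,'m::{finite,wellorder}) vec \<Rightarrow> (real,'m) vec"
  assumes T: "orthogonal_transformation T"
  shows "distr lborel borel T = lborel"
proof (rule lborel_eqI[symmetric])
  have T_measurable: "T \<in> borel_measurable borel"
    using T by (simp add: borel_measurable_linear orthogonal_transformation_linear)
  have T_inv: "orthogonal_transformation (inv T)"
    using T orthogonal_transformation_inv by blast
  fix l u :: "(real,'m) vec" assume "\<And>b. b \<in> Basis \<Longrightarrow> l \<bullet> b \<le> u \<bullet> b"
  have preimage: "T -` box l u = inv T ` box l u"
    using T by (metis bij_vimage_eq_inv_image orthogonal_transformation_bij)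
  have image_borel: "inv T ` box l u \<in> sets borel"
    using T_measurable preimage by (metis borel_open measurable_sets open_box space_borel vimage_Int Int_UNIV_right)
  have box: "box l u \<in> lmeasurable" by simp
  have "emeasure (distr lborel borel T) (box l u) = emeasure lborel (inv T ` box l u)"
    using T_measurable preimage by (simp add: emeasure_distr)
  also have "\<dots> = emeasure lebesgue (inv T ` box l u)"
    using image_borel by simp
  also have "\<dots> = measure lebesgue (inv T ` box l u)"
    using measurable_orthogonal_image[OF T_inv box] by (simp add: emeasure_eq_measure2)
  also have "\<dots> = measure lebesgue (box l u)"
    using measure_orthogonal_image[OF T_inv box] by simp
  also have "\<dots> = emeasure lborel (box l u)"
    using box by (simp add: emeasure_eq_measure2)
  also have "\<dots> = (\<Prod>b\<in>Basis. (u - l) \<bullet> b)"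
    using \<open>\<And>b. b \<in> Basis \<Longrightarrow> l \<bullet> b \<le> u \<bullet> b\<close> by (simp add: emeasure_lborel_box_eq)
  finally show "emeasure (distr lborel borel T) (box l u) = (\<Prod>b\<in>Basis. (u - l) \<bullet> b)" .
qed simp

lemma lborel_distr_orthogonal:
  fixes T :: "real^'n::finite \<Rightarrow> real^'n"
  assumes T: "orthogonal_transformation T"
  shows "distr lborel borel T = lborel"
proof -
  let ?P = "\<lambda>x::real^'n. \<chi> j::'n well_ordered. x $ Rep_well_ordered j"
  let ?Q = "\<lambda>y::real^'n well_ordered. \<chi> i::'n. y $ Abs_well_ordered i"
  let ?T' = "?P \<circ> T \<circ> ?Q"
  have P: "orthogonal_transformation ?P" "distr lborel borel ?P = lborel"
    using orthogonal_transformation_vec_reindex lborel_distr_vec_reindex bij_Rep_well_ordered by blast+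
  have Q: "orthogonal_transformation ?Q" "distr lborel borel ?Q = lborel"
    using orthogonal_transformation_vec_reindex lborel_distr_vec_reindex bij_Abs_well_ordered by blast+
  have T': "orthogonal_transformation ?T'"
    using T P(1) Q(1) by (intro orthogonal_transformation_compose)
  have measurable: "?P \<in> borel_measurable borel" "?Q \<in> borel_measurable borel" "?T' \<in> borel_measurable borel"
    using P(1) Q(1) T' by (simp_all add: borel_measurable_linear orthogonal_transformation_linear)
  have "lborel = distr (distr (distr lborel borel ?P) borel ?T') borel ?Q"
    using P(2) Q(2) lborel_distr_orthogonal_wellorder[OF T'] by simp
  also have "\<dots> = distr (distr lborel borel (?T' \<circ> ?P)) borel ?Q"
    using measurable by (simp add: distr_distr)
  also have "\<dots> = distr lborel borel (?Q \<circ> (?T' \<circ> ?P))"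
    by (rule distr_distr) (use measurable measurable_comp[OF measurable(1,3)] in simp_all)
  also have "?Q \<circ> (?T' \<circ> ?P) = T"
    by (simp add: fun_eq_iff vec_eq_iff Abs_well_ordered_inverse Rep_well_ordered_inverse)
  finally show ?thesis by simp
qed

lemma sets_gaussian [simp]: "sets gaussian = sets borel"
  by (simp add: gaussian_def)

lemma prod_std_normal_density:
  fixes x :: "real^'n::finite"
  shows "(\<Prod>i\<in>UNIV. std_normal_density (x $ i)) = (1 / sqrt (2 * pi)) ^ CARD('n) * exp (- (norm x)\<^sup>2 / 2)"
proof -
  have "(\<Prod>i\<in>UNIV. std_normal_density (x $ i)) = (\<Prod>i\<in>UNIV. 1 / sqrt (2 * pi) * exp (- (x $ i)\<^sup>2 / 2))"
    by (simp add: normal_density_def)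
  also have "\<dots> = (1 / sqrt (2 * pi)) ^ CARD('n) * exp (\<Sum>i\<in>UNIV. - (x $ i)\<^sup>2 / 2)"
    by (simp only: prod.distrib prod_constant exp_sum[OF finite])
  also have "(\<Sum>i\<in>UNIV. - (x $ i)\<^sup>2 / 2) = - (norm x)\<^sup>2 / 2"
    by (simp add: norm_vec_def L2_set_def sum_nonneg sum_divide_distrib[symmetric] sum_negf)
  finally show ?thesis .
qed

lemma distr_gaussian_orthogonal:
  fixes A :: "real^'n::finite^'n"
  assumes "orthogonal_matrix A"
  shows "distr gaussian borel (\<lambda>x. A *v x) = gaussian"
proof -
  let ?g = "\<lambda>x::real^'n. ennreal (\<Prod>i\<in>UNIV. std_normal_density (x $ i))"
  have A: "orthogonal_transformation (\<lambda>x. A *v x)"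
    using assms by (simp add: orthogonal_transformation_matrix)
  then have "?g (A *v x) = ?g x" for x
    by (simp only: prod_std_normal_density orthogonal_transformation_norm)
  moreover have "density (distr lborel borel (\<lambda>x. A *v x)) ?g
      = distr (density lborel (\<lambda>x. ?g (A *v x))) borel (\<lambda>x. A *v x)"
    using A by (intro density_distr) (simp_all add: borel_measurable_linear orthogonal_transformation_linear)
  ultimately show ?thesis
    unfolding gaussian_def using lborel_distr_orthogonal[OF A] by simp
qed

lemma KL_gaussian_push_orthogonal:
  assumes A: "orthogonal_matrix A" and "prob_space P" and "sets P = sets borel"
  shows "KL gaussian (push (\<lambda>x. A *v x) P) = KL gaussian P"
proof -
  have "gaussian = push (\<lambda>x. A *v x) gaussian"
    using distr_gaussian_orthogonal[OF A] by (simp add: push_def)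
  then have "KL gaussian (push (\<lambda>x. A *v x) P) = KL (push (\<lambda>x. A *v x) gaussian) (push (\<lambda>x. A *v x) P)"
    by simp
  also have "\<dots> = KL gaussian P"
    using assms by (intro KL_push[where S = "\<lambda>x. x v* A"])
      (simp_all add: prob_space_imp_sigma_finite orthogonal_matrix_vector_mult_cancel)
  finally show ?thesis .
qed

lemma homeomorphism_diffeo_real:
  assumes "diffeo_real f"
  shows "homeomorphism UNIV UNIV f (inv f)"
proof
  show "continuous_on UNIV f" "continuous_on UNIV (inv f)"
    using assms unfolding diffeo_real_def by (metis DERIV_isCont continuous_at_imp_continuous_on)+
  have "bij f" using assms unfolding diffeo_real_def by blast
  then show "inv f (f x) = x" "f (inv f y) = y" for x y
    by (simp_all add: bij_is_inj bij_is_surj surj_f_inv_f)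
qed simp_all

lemma homeomorphism_coord_diffeos:
  assumes "F \<in> coord_diffeos"
  shows "homeomorphism UNIV UNIV F (inv F)"
proof -
  obtain f where f: "\<And>i. diffeo_real (f i)" and F: "F = (\<lambda>x. \<chi> i. f i (x $ i))"
    using assms unfolding coord_diffeos_def by blast
  define G where "G = (\<lambda>y::real^'a. \<chi> i. inv (f i) (y $ i))"
  note hom = homeomorphism_diffeo_real[OF f]
  have GF: "G (F x) = x" and FG: "F (G y) = y" for x y
    using hom[THEN homeomorphism_apply1] hom[THEN homeomorphism_apply2]
    by (simp_all add: F G_def vec_eq_iff)
  have "homeomorphism UNIV UNIV F G"
  proof
    show "continuous_on UNIV F" unfolding F
      by (intro continuous_on_vec_lambda continuous_on_compose2[OF homeomorphism_cont1[OF hom]]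
          continuous_on_component continuous_on_id) auto
    show "continuous_on UNIV G" unfolding G_def
      by (intro continuous_on_vec_lambda continuous_on_compose2[OF homeomorphism_cont2[OF hom]]
          continuous_on_component continuous_on_id) auto
  qed (simp_all add: GF FG)
  moreover have "inv F = G"
    using GF FG by (rule inv_equality)
  ultimately show ?thesis by simp
qed

lemma
  assumes "F \<in> coord_diffeos"
  shows borel_measurable_coord_diffeo: "F \<in> borel_measurable borel"
    and borel_measurable_coord_diffeo_inv: "inv F \<in> borel_measurable borel"
  using homeomorphism_coord_diffeos[OF assms]
  by (auto intro: borel_measurable_continuous_onI dest: homeomorphism_cont1 homeomorphism_cont2)

lemma id_in_coord_diffeos: "id \<in> coord_diffeos"
proof -
  have "diffeo_real (\<lambda>x::real. x)"
    unfolding diffeo_real_def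
    by (auto intro!: exI[of _ "\<lambda>_. 1"] derivative_eq_intros simp: inv_def bij_betw_def inj_on_def)
  then show ?thesis
    unfolding coord_diffeos_def by (intro CollectI exI[of _ "\<lambda>i x. x"]) (auto simp: id_def)
qed

lemma sets_pseq [simp]: "sets (pseq p R F k) = sets borel"
  by (cases k) simp_all

lemma measurable_pseq [simp]: "measurable (pseq p R F k) M = measurable borel M"
  by (rule measurable_cong_sets) simp_all

lemma prob_space_pseq:
  assumes "p \<in> borel_measurable borel" and "(\<integral>\<^sup>+ x. ennreal (p x) \<partial>lborel) = 1"
    and "\<And>k. k \<ge> 1 \<Longrightarrow> F k \<in> coord_diffeos"
  shows "prob_space (pseq p R F k)"
proof (induction k)
  case 0
  have "emeasure (density lborel (\<lambda>x. ennreal (p x))) UNIV = (\<integral>\<^sup>+ x. ennreal (p x) \<partial>lborel)"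
    using assms(1) by (simp add: emeasure_density)
  then show ?case
    using assms(2) by (intro prob_spaceI) simp
next
  case (Suc k)
  then interpret prob_space "pseq p R F k" .
  have "prob_space (push (\<lambda>x. R (Suc k) *v x) (pseq p R F k))"
    unfolding push_def by (rule prob_space_distr) simp
  moreover have "inv (F (Suc k)) \<in> borel_measurable borel"
    using assms(3) by (simp add: borel_measurable_coord_diffeo_inv)
  ultimately show ?case
    by (simp add: push_def prob_space.prob_space_distr)
qed

lemma KL_gaussian_pseq_Suc:
  assumes "prob_space (pseq p R F k)" and F: "F (Suc k) \<in> coord_diffeos"
  shows "KL gaussian (pseq p R F (Suc k))
    = KL (push (F (Suc k)) gaussian) (push (\<lambda>x. R (Suc k) *v x) (pseq p R F k))"
proof -
  let ?G = "F (Suc k)" and ?P = "push (\<lambda>x. R (Suc k) *v x) (pseq p R F k)"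
  have G: "?G \<in> borel_measurable borel" "inv ?G \<in> borel_measurable borel"
      "inv ?G (?G x) = x" "?G (inv ?G x) = x" for x
    using F homeomorphism_coord_diffeos[OF F] by (simp_all add: borel_measurable_coord_diffeo
        borel_measurable_coord_diffeo_inv homeomorphism_apply1 homeomorphism_apply2)
  have "prob_space ?P"
    using assms(1) unfolding push_def by (rule prob_space.prob_space_distr) simp
  have "gaussian = push (inv ?G) (push ?G gaussian)"
    using G by (simp add: push_push_inverse gaussian_def)
  then have "KL gaussian (pseq p R F (Suc k)) = KL (push (inv ?G) (push ?G gaussian)) (push (inv ?G) ?P)"
    by simp
  also have "\<dots> = KL (push ?G gaussian) ?P"
    using \<open>prob_space ?P\<close> G by (intro KL_push[where S = ?G]) (simp_all add: prob_space_imp_sigma_finite)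
  finally show ?thesis .
qed

lemma KL_gaussian_pseq_Suc_le:
  assumes "prob_space (pseq p R F k)"
    and R: "orthogonal_matrix (R (Suc k))" and F: "F (Suc k) \<in> coord_diffeos"
    and "KL (push (F (Suc k)) gaussian) (push (\<lambda>x. R (Suc k) *v x) (pseq p R F k))
      \<le> KL gaussian (push (\<lambda>x. R (Suc k) *v x) (pseq p R F k))"
  shows "KL gaussian (pseq p R F (Suc k)) \<le> KL gaussian (pseq p R F k)"
proof -
  have "KL gaussian (pseq p R F (Suc k))
      = KL (push (F (Suc k)) gaussian) (push (\<lambda>x. R (Suc k) *v x) (pseq p R F k))"
    by (rule KL_gaussian_pseq_Suc[OF assms(1) F])
  also have "\<dots> \<le> KL gaussian (push (\<lambda>x. R (Suc k) *v x) (pseq p R F k))"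
    by (rule assms(4))
  also have "\<dots> = KL gaussian (pseq p R F k)"
    by (rule KL_gaussian_push_orthogonal[OF R assms(1) sets_pseq])
  finally show ?thesis .
qed

lemma push_pseq_Suc:
  assumes R: "orthogonal_matrix (R (Suc k))" and F: "F (Suc k) \<in> coord_diffeos"
  shows "push (\<lambda>x. F (Suc k) x v* R (Suc k)) (pseq p R F (Suc k)) = pseq p R F k"
proof -
  let ?G = "F (Suc k)"
  note [measurable] = borel_measurable_coord_diffeo[OF F] borel_measurable_coord_diffeo_inv[OF F]
  have "pseq p R F (Suc k) = push (\<lambda>x. inv ?G (R (Suc k) *v x)) (pseq p R F k)"
    by (simp add: push_push comp_def)
  also have "push (\<lambda>x. ?G x v* R (Suc k)) \<dots> = pseq p R F k"
  proof (rule push_push_inverse)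
    show "?G (inv ?G (R (Suc k) *v x)) v* R (Suc k) = x" for x
      using homeomorphism_apply2[OF homeomorphism_coord_diffeos[OF F]] R
      by (simp add: orthogonal_matrix_vector_mult_cancel)
  qed (simp, measurable, measurable)
  finally show ?thesis .
qed

lemma borel_measurable_Tcomp:
  assumes "\<And>k. k \<ge> 1 \<Longrightarrow> F k \<in> coord_diffeos"
  shows "Tcomp R F k \<in> borel_measurable borel"
proof (induction k)
  case (Suc k)
  note [measurable] = Suc.IH borel_measurable_coord_diffeo[OF assms[of "Suc k"]]
  show ?case by simp
qed simp

lemma KL_push_Tcomp:
  assumes prob: "\<And>k. prob_space (pseq p R F k)"
    and R: "\<And>k. k \<ge> 1 \<Longrightarrow> orthogonal_matrix (R k)"
    and F: "\<And>k. k \<ge> 1 \<Longrightarrow> F k \<in> coord_diffeos"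
    and "sets Q = sets borel"
  shows "KL (push (Tcomp R F k) Q) (pseq p R F 0) = KL Q (pseq p R F k)"
  using assms(4)
proof (induction k arbitrary: Q)
  case 0
  then show ?case by (simp add: push_def distr_id2)
next
  case (Suc k)
  let ?G = "F (Suc k)"
  let ?S = "\<lambda>x. ?G x v* R (Suc k)"
  have R_Suc: "orthogonal_matrix (R (Suc k))" and F_Suc: "?G \<in> coord_diffeos"
    using R F by simp_all
  note [measurable] = borel_measurable_Tcomp[OF F] borel_measurable_coord_diffeo[OF F_Suc]
    borel_measurable_coord_diffeo_inv[OF F_Suc]
  have "push (Tcomp R F (Suc k)) Q = push (Tcomp R F k) (push ?S Q)"
    using Suc.prems by (subst push_push) (simp_all add: measurable_cong_sets[OF Suc.prems refl] comp_def)
  then have "KL (push (Tcomp R F (Suc k)) Q) (pseq p R F 0) = KL (push ?S Q) (pseq p R F k)"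
    using Suc.IH by simp
  also have "\<dots> = KL (push ?S Q) (push ?S (pseq p R F (Suc k)))"
    by (simp only: push_pseq_Suc[of R k F p, OF R_Suc F_Suc])
  also have "\<dots> = KL Q (pseq p R F (Suc k))"
  proof (rule KL_push)
    show "inv ?G (R (Suc k) *v ?S x) = x" for x
      using homeomorphism_apply1[OF homeomorphism_coord_diffeos[OF F_Suc]] R_Suc
      by (simp add: orthogonal_matrix_vector_mult_cancel)
  qed (use prob[of "Suc k"] Suc.prems in \<open>simp_all add: prob_space_imp_sigma_finite del: pseq.simps\<close>)
  finally show ?case .
qed

theorem proposition2:
  fixes p :: "real ^ 'n :: finite \<Rightarrow> real"
    and R :: "nat \<Rightarrow> real ^ 'n ^ 'n"
    and F :: "nat \<Rightarrow> real ^ 'n \<Rightarrow> real ^ 'n"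
  assumes p_meas: "p \<in> borel_measurable borel"
    and p_nonneg: "\<And>x. p x \<ge> 0"
    and p_int: "(\<integral>\<^sup>+ x. ennreal (p x) \<partial>lborel) = 1"
    and R_orth: "\<And>k. k \<ge> 1 \<Longrightarrow> orthogonal_matrix (R k)"
    and F_in: "\<And>k. k \<ge> 1 \<Longrightarrow> F k \<in> coord_diffeos"
    and F_argmin: "\<And>k G. k \<ge> 1 \<Longrightarrow> G \<in> coord_diffeos \<Longrightarrow>
         KL (push (F k) gaussian) (push (\<lambda>x. R k *v x) (pseq p R F (k - 1)))
           \<le> KL (push G gaussian) (push (\<lambda>x. R k *v x) (pseq p R F (k - 1)))"
  shows "\<forall>k\<ge>1. KL gaussian (pseq p R F k) \<le> KL gaussian (pseq p R F (k - 1))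
              \<and> KL (qseq R F k) (density lborel (\<lambda>x. ennreal (p x)))
                  \<le> KL (qseq R F (k - 1)) (density lborel (\<lambda>x. ennreal (p x)))"
proof -
  have prob: "prob_space (pseq p R F k)" for k
    using p_meas p_int F_in by (rule prob_space_pseq)
  have KL_qseq: "KL (qseq R F k) (density lborel (\<lambda>x. ennreal (p x))) = KL gaussian (pseq p R F k)" for k
    using KL_push_Tcomp[OF prob R_orth F_in, of gaussian k] by (simp add: qseq_def)
  have mono: "KL gaussian (pseq p R F (Suc k)) \<le> KL gaussian (pseq p R F k)" for k
  proof (rule KL_gaussian_pseq_Suc_le)
    show "KL (push (F (Suc k)) gaussian) (push (\<lambda>x. R (Suc k) *v x) (pseq p R F k))
        \<le> KL gaussian (push (\<lambda>x. R (Suc k) *v x) (pseq p R F k))"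
      using F_argmin[of "Suc k" id] by (simp add: id_in_coord_diffeos push_id del: pseq.simps)
  qed (simp_all add: prob R_orth F_in)
  show ?thesis
  proof (intro allI impI)
    fix k :: nat
    assume "k \<ge> 1"
    then obtain j where "k = Suc j" by (cases k) auto
    then show "KL gaussian (pseq p R F k) \<le> KL gaussian (pseq p R F (k - 1))
        \<and> KL (qseq R F k) (density lborel (\<lambda>x. ennreal (p x)))
          \<le> KL (qseq R F (k - 1)) (density lborel (\<lambda>x. ennreal (p x)))"
      using mono[of j] by (simp add: KL_qseq del: pseq.simps)
  qed
qed

end
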